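(* Let $\mathcal{A}$ be a ring with identity $1$ and let $a,b,d\in\mathcal{A}$. The following statements are equivalent: (i) $b$ is the Mary (natural) inverse of $a$ along $d$, i.e. $bab=b$, $b\mathcal{A}=d\mathcal{A}$ and $\mathcal{A}b=\mathcal{A}d$; (ii) $b$ is an outer inverse of $a$ (i.e. $bab=b$), $d$ is inner regular, and there exists a reflexive inverse $t\in\mathcal{A}$ of $d$ (i.e. $dtd=d$ and $tdt=t$) such that $ba=dt$ and $ab=td$.
   Context: For $x,y$ in a ring $\mathcal{A}$ with identity, $x\mathcal{A}\subset y\mathcal{A}$ means there exists $z\in\mathcal{A}$ with $x=yz$, and $x\mathcal{A}=y\mathcal{A}$ means both inclusions hold; similarly $\mathcal{A}x\subset\mathcal{A}y$ means $x=zy$ for some $z\in\mathcal{A}$. An element $d$ is inner regular if there is $t\in\mathcal{A}$ with $dtd=d$. An element $b$ satisfying $bab=b$, $b\mathcal{A}=d\mathcal{A}$, $\mathcal{A}b=\mathcal{A}d$ is called the Mary (natural) inverse of $a$ along $d$; it is unique when it exists. *)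

theory Defs
  imports Main
begin

definition right_ideal_le :: "'a::ring_1 \<Rightarrow> 'a \<Rightarrow> bool" where
  "right_ideal_le x y \<longleftrightarrow> (\<exists>z. x = y * z)"

definition left_ideal_le :: "'a::ring_1 \<Rightarrow> 'a \<Rightarrow> bool" where
  "left_ideal_le x y \<longleftrightarrow> (\<exists>z. x = z * y)"

definition right_ideal_eq :: "'a::ring_1 \<Rightarrow> 'a \<Rightarrow> bool" where
  "right_ideal_eq x y \<longleftrightarrow> right_ideal_le x y \<and> right_ideal_le y x"

definition left_ideal_eq :: "'a::ring_1 \<Rightarrow> 'a \<Rightarrow> bool" where
  "left_ideal_eq x y \<longleftrightarrow> left_ideal_le x y \<and> left_ideal_le y x"

definition inner_regular :: "'a::ring_1 \<Rightarrow> bool" where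
  "inner_regular d \<longleftrightarrow> (\<exists>t. d * t * d = d)"

definition mary_inverse_along :: "'a::ring_1 \<Rightarrow> 'a \<Rightarrow> 'a \<Rightarrow> bool" where
  "mary_inverse_along b a d \<longleftrightarrow>
     b * a * b = b \<and> right_ideal_eq b d \<and> left_ideal_eq b d"

end

theory Submission
  imports Defs
begin

text \<open>If \<open>b\<close> is an outer inverse of \<open>a\<close> generating the same principal one-sided ideals
  as \<open>d\<close>, then \<open>ba\<close> is a left and \<open>ab\<close> a right identity for \<open>d\<close>; writing \<open>b = d x = z d\<close>,
  the element \<open>t = a b x a\<close> is a reflexive inverse of \<open>d\<close> with \<open>dt = ba\<close> and \<open>td = ab\<close>.
  Conversely, these identities directly exhibit \<open>b\<close> and \<open>d\<close> as left and right multiples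
  of each other.\<close>

lemma mary_inverse_along_iff_factors:
  "mary_inverse_along b a d \<longleftrightarrow> b * a * b = b \<and>
     (\<exists>x. b = d * x) \<and> (\<exists>y. d = b * y) \<and> (\<exists>z. b = z * d) \<and> (\<exists>w. d = w * b)"
  unfolding mary_inverse_along_def right_ideal_eq_def left_ideal_eq_def
    right_ideal_le_def left_ideal_le_def
  by blast

lemma outer_inverse_absorbs_generator:
  fixes a b d :: "'a::semigroup_mult"
  assumes bab: "b * a * b = b" and dy: "d = b * y" and dw: "d = w * b"
  shows "b * a * d = d" and "d * a * b = d"
proof -
  have "b * a * d = (b * a * b) * y" by (simp add: dy mult.assoc)
  then show "b * a * d = d" by (simp add: bab dy)
  have "d * a * b = w * (b * a * b)" by (simp add: dw mult.assoc)
  then show "d * a * b = d" by (simp add: bab dw)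
qed

lemma reflexive_inverse_from_outer_inverse_along:
  fixes a b d :: "'a::semigroup_mult"
  assumes bab: "b * a * b = b"
    and dx: "b = d * x" and dy: "d = b * y" and dz: "b = z * d" and dw: "d = w * b"
  defines "t \<equiv> a * b * x * a"
  shows "d * t * d = d" and "t * d * t = t" and "b * a = d * t" and "a * b = t * d"
proof -
  have bad: "b * a * d = d" and dab: "d * a * b = d"
    using outer_inverse_absorbs_generator[OF bab dy dw] by auto
  have "d * t = (d * a * b) * x * a" by (simp add: t_def mult.assoc)
  also have "\<dots> = b * a" by (simp only: dab dx[symmetric])
  finally show dt: "b * a = d * t" ..
  have dxad: "d * x * a * d = d" using bad by (simp only: dx)
  have "t * d = a * z * (d * x * a * d)" by (simp add: t_def dz mult.assoc)
  also have "\<dots> = a * (z * d)" using dxad by (simp add: mult.assoc)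
  also have "\<dots> = a * b" by (simp only: dz)
  finally show td: "a * b = t * d" ..
  show "d * t * d = d" using bad by (simp add: dt)
  have "t * d * t = a * b * t" by (simp only: td)
  also have "\<dots> = a * (b * a * b) * x * a" by (simp add: t_def mult.assoc)
  finally have "t * d * t = a * (b * a * b) * x * a" .
  then show "t * d * t = t" by (simp add: bab t_def)
qed

lemma factors_from_reflexive_inverse:
  fixes a b d t :: "'a::semigroup_mult"
  assumes bab: "b * a * b = b" and dtd: "d * t * d = d"
    and ba: "b * a = d * t" and ab: "a * b = t * d"
  shows "b = d * (t * b)" and "d = b * (a * d)" and "b = (b * t) * d" and "d = (d * a) * b"
proof -
  show "b = d * (t * b)" using bab by (simp add: ba mult.assoc[symmetric])
  show "d = b * (a * d)" using dtd by (simp add: ba mult.assoc[symmetric])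
  have "(b * t) * d = b * (a * b)" by (simp add: ab mult.assoc)
  then show "b = (b * t) * d" by (simp add: bab mult.assoc[symmetric])
  have "(d * a) * b = d * (t * d)" by (simp add: ab mult.assoc)
  then show "d = (d * a) * b" by (simp add: dtd mult.assoc[symmetric])
qed

theorem theorem2p3:
  fixes a b d :: "'a::ring_1"
  shows "mary_inverse_along b a d \<longleftrightarrow>
    (b * a * b = b \<and> inner_regular d \<and>
     (\<exists>t. d * t * d = d \<and> t * d * t = t \<and> b * a = d * t \<and> a * b = t * d))"
proof
  assume "mary_inverse_along b a d"
  then obtain x y z w where bab: "b * a * b = b"
    and "b = d * x" "d = b * y" "b = z * d" "d = w * b"
    unfolding mary_inverse_along_iff_factors by blast
  from reflexive_inverse_from_outer_inverse_along[OF this]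
  show "b * a * b = b \<and> inner_regular d \<and>
     (\<exists>t. d * t * d = d \<and> t * d * t = t \<and> b * a = d * t \<and> a * b = t * d)"
    unfolding inner_regular_def using bab by blast
next
  assume "b * a * b = b \<and> inner_regular d \<and>
     (\<exists>t. d * t * d = d \<and> t * d * t = t \<and> b * a = d * t \<and> a * b = t * d)"
  then obtain t where "b * a * b = b" "d * t * d = d" "b * a = d * t" "a * b = t * d"
    by blast
  with factors_from_reflexive_inverse[OF this]
  show "mary_inverse_along b a d"
    unfolding mary_inverse_along_iff_factors by blast
qed

end
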